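(* For every integer $n\geq 2$, $$\sum_{k=1}^{n-1}\frac{B_{2k}B_{2n-2k}}{(2k)(2n-2k)}=\frac1n\sum_{k=1}^{n-1}\frac{B_{2k}B_{2n-2k}}{2k}\binom{2n}{2k}+\frac{B_{2n}}{n}H_{2n}=\frac1n\sum_{k=1}^{n}\frac{B_{2k}B_{2n-2k}}{2k}\binom{2n}{2k}+\frac{B_{2n}}{n}H_{2n-1}.$$
   Context: $B_n$ denotes the Bernoulli numbers, defined by $\frac{x}{e^x-1}=\sum_{n\ge 0}B_n\frac{x^n}{n!}$ (so $B_0=1$). $H_i=\sum_{j=1}^i \frac1j$ is the $i$-th harmonic number. *)

theory Defs
  imports "HOL-Analysis.Analysis" "HOL-Computational_Algebra.Formal_Power_Series"
begin

definition bernoulli :: "nat \<Rightarrow> real" where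
  "bernoulli n = fact n * fps_nth ((fps_X :: real fps) / (fps_exp 1 - 1)) n"


end

theory Submission
  imports Defs
begin

(* Write beta(x) = x / (e^x - 1).  Clearing the denominators e^(px) - 1, e^(qx) - 1 and e^x - 1
   shows that for p + q = 1
     beta(px) beta(qx) - beta(x) = beta(x) (pq x + q (beta(px) - 1) + p (beta(qx) - 1))
   as formal power series in x.  Take p = u and q = 1 - u, polynomials in a second variable u,
   and apply coefficientwise the linear functional  P |-> integral_0^1 (P(u) - P(0)) / u du,
   which sends u^i (1 - u)^j to the Beta value (i - 1)! j! / (i + j)! and (1 - u)^m to -H_m.
   This turns the binomial convolution of Bernoulli numbers into the unweighted one, producing
   a harmonic number on the way.  For m = 2n the odd Bernoulli numbers drop out, and the
   partial fraction 1/(k (n - k)) = (1/k + 1/(n - k)) / n gives the theorem. *)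

unbundle no vec_syntax
unbundle fps_syntax

definition bernoulli_fps :: "real fps" where
  "bernoulli_fps = fps_X / (fps_exp 1 - 1)"

lemma fps_nth_bernoulli_fps: "bernoulli_fps $ k = bernoulli k / fact k"
  by (simp add: bernoulli_def bernoulli_fps_def)

lemma bernoulli_fps_times_exp_minus_one: "bernoulli_fps * (fps_exp 1 - 1) = fps_X"
proof -
  have "subdegree (fps_exp (1::real) - 1) = 1"
    by (rule subdegreeI) (auto simp: numeral_2_eq_2)
  then show ?thesis
    unfolding bernoulli_fps_def by (intro fps_times_divide_eq) auto
qed

lemma bernoulli_0: "bernoulli 0 = 1"
proof -
  have "(bernoulli_fps * (fps_exp 1 - 1)) $ 1 = 1"
    by (simp add: bernoulli_fps_times_exp_minus_one)
  then show ?thesis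
    by (simp add: fps_nth_bernoulli_fps)
qed

lemma bernoulli_fps_nth_0: "bernoulli_fps $ 0 = 1"
  by (simp add: fps_nth_bernoulli_fps bernoulli_0)

lemma bernoulli_fps_compose_uminus: "bernoulli_fps oo - fps_X = bernoulli_fps + fps_X"
proof -
  define E' where "E' = fps_exp (-1 :: real)"
  have exp_inverse: "fps_exp 1 * E' = 1"
    unfolding E'_def fps_exp_add_mult[symmetric] by simp
  have "(bernoulli_fps oo - fps_X) * (E' - 1) = - fps_X"
    using arg_cong[OF bernoulli_fps_times_exp_minus_one, of "\<lambda>f. f oo - fps_X"]
    by (simp add: fps_compose_mult_distrib fps_compose_sub_distrib E'_def)
  moreover have "(bernoulli_fps + fps_X) * (E' - 1) = - fps_X"
  proof -
    have "(bernoulli_fps + fps_X) * (E' - 1)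
        = - (bernoulli_fps * (fps_exp 1 - 1)) * E' + fps_X * (E' - 1)
          + bernoulli_fps * (fps_exp 1 * E' - 1)"
      by (simp add: algebra_simps)
    then show ?thesis
      unfolding exp_inverse bernoulli_fps_times_exp_minus_one by (simp add: algebra_simps)
  qed
  moreover have "(E' - 1) $ 1 \<noteq> 0"
    by (simp add: E'_def)
  then have "E' - 1 \<noteq> 0"
    by auto
  ultimately show ?thesis
    by (metis mult_right_cancel)
qed

lemma bernoulli_odd_eq_0:
  assumes "odd k" and "k \<noteq> 1"
  shows "bernoulli k = 0"
proof -
  have "(bernoulli_fps oo - fps_X) $ k = (bernoulli_fps + fps_X) $ k"
    by (simp only: bernoulli_fps_compose_uminus)
  then have "- bernoulli_fps $ k = bernoulli_fps $ k"
    using assms by (simp add: fps_compose_uminus')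
  then show ?thesis
    by (simp add: fps_nth_bernoulli_fps)
qed

(* f(p x), a series in x whose coefficients are polynomials in a second variable *)
definition fps_dilate :: "'a::comm_ring_1 poly \<Rightarrow> 'a fps \<Rightarrow> 'a poly fps" where
  "fps_dilate p f = Abs_fps (\<lambda>k. smult (f $ k) (p ^ k))"

lemma fps_dilate_nth [simp]: "fps_dilate p f $ k = smult (f $ k) (p ^ k)"
  by (simp add: fps_dilate_def)

lemma fps_dilate_mult: "fps_dilate p (f * g) = fps_dilate p f * fps_dilate p g"
proof (rule fps_ext)
  fix n
  show "fps_dilate p (f * g) $ n = (fps_dilate p f * fps_dilate p g) $ n"
    unfolding fps_dilate_nth fps_mult_nth smult_sum
    by (intro sum.cong refl) (auto simp: power_add[symmetric] mult.commute)
qed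

lemma fps_dilate_diff: "fps_dilate p (f - g) = fps_dilate p f - fps_dilate p g"
  by (rule fps_ext) (simp add: smult_diff_left)

lemma fps_dilate_one: "fps_dilate p 1 = 1"
  by (rule fps_ext) simp

lemma fps_dilate_X: "fps_dilate p fps_X = fps_const p * fps_X"
  by (rule fps_ext) (auto simp: le_Suc_eq)

lemma fps_dilate_exp_mult:
  fixes p q :: "'a::field_char_0 poly"
  shows "fps_dilate p (fps_exp 1) * fps_dilate q (fps_exp 1) = fps_dilate (p + q) (fps_exp 1)"
proof (rule fps_ext)
  fix n
  have "(fps_dilate p (fps_exp 1) * fps_dilate q (fps_exp 1)) $ n
      = (\<Sum>i=0..n. [:1 / fact n:] * (of_nat (n choose i) * p ^ i * q ^ (n - i)))"
    unfolding fps_mult_nth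
  proof (intro sum.cong refl)
    fix i assume "i \<in> {0..n}"
    then have "(1::'a) / (fact (n - i) * fact i) = of_nat (n choose i) / fact n"
      by (simp add: binomial_fact field_simps)
    then show "fps_dilate p (fps_exp 1) $ i * fps_dilate q (fps_exp 1) $ (n - i)
        = [:1 / fact n:] * (of_nat (n choose i) * p ^ i * q ^ (n - i))"
      by (simp add: of_nat_poly mult.assoc)
  qed
  also have "\<dots> = [:1 / fact n:] * (p + q) ^ n"
    by (simp add: binomial_ring atLeast0AtMost sum_distrib_left)
  finally show "(fps_dilate p (fps_exp 1) * fps_dilate q (fps_exp 1)) $ n
      = fps_dilate (p + q) (fps_exp 1) $ n"
    by simp
qed

lemma fps_dilate_exp_minus_one_nonzero:
  fixes p :: "'a::field_char_0 poly"
  assumes "p \<noteq> 0"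
  shows "fps_dilate p (fps_exp 1) - 1 \<noteq> 0"
proof -
  have "(fps_dilate p (fps_exp 1) - 1) $ 1 = p"
    by simp
  then show ?thesis
    using assms by (metis fps_zero_nth)
qed

lemma fps_dilate_bernoulli:
  "fps_dilate p bernoulli_fps * (fps_dilate p (fps_exp 1) - 1) = fps_const p * fps_X"
  using arg_cong[OF bernoulli_fps_times_exp_minus_one, of "fps_dilate p"]
  by (simp add: fps_dilate_mult fps_dilate_diff fps_dilate_one fps_dilate_X)

lemma bernoulli_fps_dilate_product:
  fixes p q :: "real poly"
  assumes "p \<noteq> 0" and "q \<noteq> 0" and "p + q = 1"
  shows "fps_dilate p bernoulli_fps * fps_dilate q bernoulli_fps - fps_dilate 1 bernoulli_fps
       = fps_dilate 1 bernoulli_fps * (fps_const (p * q) * fps_X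
           + fps_const q * (fps_dilate p bernoulli_fps - 1)
           + fps_const p * (fps_dilate q bernoulli_fps - 1))"
    (is "?Bp * ?Bq - ?B1 = ?B1 * ?G")
proof -
  define Ep Eq where "Ep = fps_dilate p (fps_exp 1) - 1" and "Eq = fps_dilate q (fps_exp 1) - 1"
  define a c where "a = fps_const p" and "c = fps_const q"
  have hp: "?Bp * Ep = a * fps_X"
    unfolding Ep_def a_def by (rule fps_dilate_bernoulli)
  have hq: "?Bq * Eq = c * fps_X"
    unfolding Eq_def c_def by (rule fps_dilate_bernoulli)
  have exp_sum: "Ep * Eq + Ep + Eq = fps_dilate 1 (fps_exp 1) - 1"
    unfolding Ep_def Eq_def fps_dilate_exp_mult[symmetric] \<open>p + q = 1\<close>[symmetric]
    by (simp add: algebra_simps)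
  have h1: "?B1 * (Ep * Eq + Ep + Eq) = fps_X"
    unfolding exp_sum using fps_dilate_bernoulli[of 1] by simp
  have c_eq: "c = 1 - a"
    using \<open>p + q = 1\<close> unfolding a_def c_def
    by (metis add_diff_cancel_left' fps_const_1_eq_1 fps_const_sub)
  have G_eq: "?G = a * c * fps_X + c * (?Bp - 1) + a * (?Bq - 1)"
    unfolding a_def c_def by simp
  define N where "N = Ep * Eq * (Ep * Eq + Ep + Eq)"
  have "N \<noteq> 0"
    using fps_dilate_exp_minus_one_nonzero[of p] fps_dilate_exp_minus_one_nonzero[of q]
      fps_dilate_exp_minus_one_nonzero[of 1] assms(1,2)
    unfolding N_def exp_sum unfolding Ep_def Eq_def by simp
  have "(?Bp * ?Bq - ?B1) * N
      = (?Bp * Ep) * (?Bq * Eq) * (Ep * Eq + Ep + Eq) - (?B1 * (Ep * Eq + Ep + Eq)) * Ep * Eq"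
    unfolding N_def by (simp add: algebra_simps)
  also have "\<dots> = fps_X * (a * c * fps_X * (Ep * Eq + Ep + Eq) - Ep * Eq)"
    unfolding hp hq h1 by (simp add: algebra_simps)
  also have "\<dots> = fps_X * (a * c * fps_X * Ep * Eq + c * (a * fps_X - Ep) * Eq
      + a * (c * fps_X - Eq) * Ep)"
    unfolding c_eq by (simp add: algebra_simps)
  also have "\<dots> = (?B1 * (Ep * Eq + Ep + Eq)) * (a * c * fps_X * Ep * Eq
      + c * (?Bp * Ep - Ep) * Eq + a * (?Bq * Eq - Eq) * Ep)"
    unfolding hp hq h1 ..
  also have "\<dots> = ?B1 * ?G * N"
    unfolding G_eq N_def by (simp add: algebra_simps)
  finally show ?thesis
    using \<open>N \<noteq> 0\<close> by simp
qed

(* integral_0^1 (p(u) - p(0)) / u du *)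
definition int_div_x :: "real poly \<Rightarrow> real" where
  "int_div_x p = (\<Sum>i=1..degree p. coeff p i / real i)"

lemma int_div_x_eq:
  assumes "degree p \<le> N"
  shows "int_div_x p = (\<Sum>i=1..N. coeff p i / real i)"
  unfolding int_div_x_def using assms
  by (intro sum.mono_neutral_left) (auto simp: coeff_eq_0)

lemma int_div_x_add: "int_div_x (p + q) = int_div_x p + int_div_x q"
proof -
  define N where "N = max (degree p) (degree q)"
  have "degree (p + q) \<le> N"
    unfolding N_def by (rule degree_add_le) auto
  then show ?thesis
    using int_div_x_eq[of p N] int_div_x_eq[of q N] int_div_x_eq[of "p + q" N]
    by (simp add: N_def add_divide_distrib sum.distrib)
qed

lemma int_div_x_smult: "int_div_x (smult c p) = c * int_div_x p"
  using int_div_x_eq[of "smult c p" "degree p"] int_div_x_eq[of p "degree p"]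
  by (simp add: sum_distrib_left)

lemma int_div_x_diff: "int_div_x (p - q) = int_div_x p - int_div_x q"
  using int_div_x_add[of p "- q"] int_div_x_smult[of "-1" q] by simp

lemma int_div_x_sum: "int_div_x (\<Sum>i\<in>A. f i) = (\<Sum>i\<in>A. int_div_x (f i))"
  by (induction A rule: infinite_finite_induct) (simp_all add: int_div_x_add int_div_x_def[of 0])

lemma int_div_x_const [simp]: "int_div_x [:c:] = 0"
  by (simp add: int_div_x_def)

lemma int_div_x_power:
  assumes "i > 0"
  shows "int_div_x ([:0, 1:] ^ i) = 1 / real i"
proof -
  have "[:0, 1:] ^ i = (monom 1 i :: real poly)"
    by (simp add: monom_altdef)
  then have "int_div_x ([:0, 1:] ^ i) = (\<Sum>k=1..i. if k = i then 1 / real i else 0)"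
    unfolding int_div_x_def by (intro sum.cong) (auto simp: degree_monom_eq coeff_monom)
  then show ?thesis
    using assms by simp
qed

lemma int_div_x_beta:
  assumes "i > 0"
  shows "int_div_x ([:0, 1:] ^ i * (1 - [:0, 1:]) ^ j) = fact (i - 1) * fact j / fact (i + j)"
  using assms
proof (induction j arbitrary: i)
  case 0
  then show ?case
    by (simp add: int_div_x_power fact_reduce)
next
  case (Suc j)
  have "x ^ i * (1 - x) ^ Suc j = x ^ i * (1 - x) ^ j - x ^ Suc i * (1 - x) ^ j" for x :: "real poly"
    by (simp add: algebra_simps)
  then have "int_div_x ([:0, 1:] ^ i * (1 - [:0, 1:]) ^ Suc j)
      = fact (i - 1) * fact j / fact (i + j) - fact i * fact j / fact (i + j + 1)"
    using Suc by (simp only: int_div_x_diff) simp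
  also have "\<dots> = fact (i - 1) * fact (Suc j) / fact (i + Suc j)"
  proof -
    define F where "F = (fact (i + j) :: real)"
    have "fact i = real i * fact (i - 1)"
      using \<open>i > 0\<close> by (simp add: fact_reduce)
    moreover have "fact (i + j + 1) = (real i + real j + 1) * F"
      and "fact (i + Suc j) = (real i + real j + 1) * F"
      and "fact (Suc j) = (real j + 1) * fact j"
      by (simp_all add: F_def algebra_simps)
    moreover have "real i + real j + 1 \<noteq> 0" and "F \<noteq> 0"
      by (simp_all add: F_def)
    ultimately show ?thesis
      by (simp only:) (simp add: divide_simps, simp add: algebra_simps F_def)
  qed
  finally show ?case .
qed

lemma int_div_x_one_minus_power: "int_div_x ((1 - [:0, 1:]) ^ m) = - harm m"
proof (induction m)
  case 0
  then show ?case
    by (simp add: one_pCons harm_def)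
next
  case (Suc m)
  have "(1 - x) ^ Suc m = (1 - x) ^ m - x ^ 1 * (1 - x) ^ m" for x :: "real poly"
    by (simp add: algebra_simps)
  then show ?case
    using Suc int_div_x_beta[of 1 m]
    by (simp add: int_div_x_diff harm_Suc inverse_eq_divide)
qed

lemma int_div_x_bernoulli_kernel:
  defines "u \<equiv> [:0, 1:] :: real poly"
  shows "int_div_x ((fps_const (u * (1 - u)) * fps_X + fps_const (1 - u) * (fps_dilate u bernoulli_fps - 1)
            + fps_const u * (fps_dilate (1 - u) bernoulli_fps - 1)) $ k)
         = (if k = 0 then 0 else (if k = 1 then 1 / 2 else 0) + bernoulli_fps $ k / real k)"
    (is "int_div_x (?G $ k) = _")
proof (cases "k = 0")
  case True
  then show ?thesis
    by (simp add: bernoulli_fps_nth_0 one_pCons int_div_x_def)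
next
  case False
  then have "k > 0"
    by simp
  have coeff: "?G $ k = (if k = 1 then u * (1 - u) else 0)
      + smult (bernoulli_fps $ k) (u ^ k * (1 - u) ^ 1 + u ^ 1 * (1 - u) ^ k)"
    using False by (simp add: smult_add_right mult_ac)
  have "fact (k + 1) = (real k + 1) * (real k * fact (k - 1))"
    using False by (simp add: fact_reduce algebra_simps)
  then have left: "int_div_x (u ^ k * (1 - u) ^ 1) = 1 / (real k * (real k + 1))"
    unfolding u_def int_div_x_beta[OF \<open>k > 0\<close>] by simp
  have right: "int_div_x (u ^ 1 * (1 - u) ^ k) = 1 / (real k + 1)"
    unfolding u_def int_div_x_beta[OF zero_less_one] by (simp add: add.commute)
  have half: "int_div_x (u * (1 - u)) = 1 / 2"
    using int_div_x_beta[OF zero_less_one, of 1] unfolding u_def by simp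
  have "int_div_x (?G $ k) = (if k = 1 then 1 / 2 else 0)
      + bernoulli_fps $ k * (1 / (real k * (real k + 1)) + 1 / (real k + 1))"
    unfolding coeff int_div_x_add int_div_x_smult left right by (simp add: half int_div_x_def[of 0])
  also have "1 / (real k * (real k + 1)) + 1 / (real k + 1) = 1 / real k"
    using \<open>k > 0\<close> by (simp add: divide_simps)
  finally show ?thesis
    using False by simp
qed

lemma bernoulli_fps_beta_identity:
  assumes "m > 0"
  shows "(\<Sum>i=1..m. bernoulli_fps $ i * bernoulli_fps $ (m - i) * (fact (i - 1) * fact (m - i) / fact m))
           - bernoulli_fps $ m * harm m
         = bernoulli_fps $ (m - 1) / 2 + (\<Sum>k=1..m. bernoulli_fps $ k / real k * bernoulli_fps $ (m - k))"
proof -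
  define b where "b = (\<lambda>k. bernoulli_fps $ k)"
  define u :: "real poly" where "u = [:0, 1:]"
  define P where
    "P = fps_dilate u bernoulli_fps * fps_dilate (1 - u) bernoulli_fps - fps_dilate 1 bernoulli_fps"
  define G where "G = fps_const (u * (1 - u)) * fps_X + fps_const (1 - u) * (fps_dilate u bernoulli_fps - 1)
    + fps_const u * (fps_dilate (1 - u) bernoulli_fps - 1)"
  have "u \<noteq> 0" and "1 - u \<noteq> 0"
    unfolding u_def by (simp_all add: one_pCons)
  then have key: "P = G * fps_dilate 1 bernoulli_fps"
    using bernoulli_fps_dilate_product[of u "1 - u"] unfolding P_def G_def by (simp add: mult.commute)
  have "P $ m = (\<Sum>i=0..m. smult (b i * b (m - i)) (u ^ i * (1 - u) ^ (m - i))) - [:b m:]"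
    by (simp add: P_def fps_mult_nth b_def mult.commute)
  then have "int_div_x (P $ m) = (\<Sum>i=0..m. b i * b (m - i) * int_div_x (u ^ i * (1 - u) ^ (m - i)))"
    by (simp add: int_div_x_diff int_div_x_sum int_div_x_smult)
  also have "\<dots> = (\<Sum>i=1..m. b i * b (m - i) * (fact (i - 1) * fact (m - i) / fact m)) - b m * harm m"
    using \<open>m > 0\<close> unfolding u_def
    by (simp add: sum.atLeast_Suc_atMost int_div_x_one_minus_power int_div_x_beta b_def
        bernoulli_fps_nth_0)
  finally have lhs: "int_div_x (P $ m)
      = (\<Sum>i=1..m. b i * b (m - i) * (fact (i - 1) * fact (m - i) / fact m)) - b m * harm m" .
  have "int_div_x ((G * fps_dilate 1 bernoulli_fps) $ m) = (\<Sum>k=0..m. int_div_x (G $ k) * b (m - k))"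
    by (simp add: fps_mult_nth int_div_x_sum int_div_x_smult b_def mult.commute)
  also have "\<dots> = (\<Sum>k=1..m. ((if k = 1 then 1 / 2 else 0) + b k / real k) * b (m - k))"
    unfolding G_def u_def int_div_x_bernoulli_kernel by (simp add: sum.atLeast_Suc_atMost b_def)
  also have "\<dots> = (\<Sum>k=1..m. if k = 1 then b (m - 1) / 2 else 0)
      + (\<Sum>k=1..m. b k / real k * b (m - k))"
    unfolding sum.distrib[symmetric] by (intro sum.cong) (auto simp: distrib_right)
  also have "(\<Sum>k=1..m. if k = 1 then b (m - 1) / 2 else 0) = b (m - 1) / 2"
    using \<open>m > 0\<close> by simp
  finally show ?thesis
    using key lhs unfolding b_def by simp
qed

lemma bernoulli_convolution_harm:
  assumes "m > 0"
  shows "(\<Sum>i=1..m. bernoulli i * bernoulli (m - i) / real i) - bernoulli m * harm m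
       = real m * bernoulli (m - 1) / 2
         + (\<Sum>k=1..m. real (m choose k) * bernoulli k * bernoulli (m - k) / real k)"
proof -
  have fact_pred: "fact k = real k * fact (k - 1)" if "k > 0" for k
    using that by (simp add: fact_reduce)
  have left: "(\<Sum>i=1..m. bernoulli_fps $ i * bernoulli_fps $ (m - i)
        * (fact (i - 1) * fact (m - i) / fact m)) * fact m
      = (\<Sum>i=1..m. bernoulli i * bernoulli (m - i) / real i)"
    unfolding sum_distrib_right
    by (intro sum.cong refl) (use fact_pred in \<open>simp add: fps_nth_bernoulli_fps\<close>)
  have right: "(\<Sum>k=1..m. bernoulli_fps $ k / real k * bernoulli_fps $ (m - k)) * fact m
      = (\<Sum>k=1..m. real (m choose k) * bernoulli k * bernoulli (m - k) / real k)"
    unfolding sum_distrib_right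
    by (intro sum.cong refl) (simp add: fps_nth_bernoulli_fps binomial_fact mult_ac)
  have middle: "bernoulli_fps $ (m - 1) / 2 * fact m = real m * bernoulli (m - 1) / 2"
    using fact_pred[OF assms] by (simp add: fps_nth_bernoulli_fps)
  have last: "bernoulli_fps $ m * harm m * fact m = bernoulli m * harm m"
    by (simp add: fps_nth_bernoulli_fps)
  show ?thesis
    using arg_cong[OF bernoulli_fps_beta_identity[OF assms], of "\<lambda>x. x * fact m"]
    unfolding left_diff_distrib distrib_right left right middle last .
qed

lemma sum_even_indices:
  fixes f :: "nat \<Rightarrow> 'a::comm_monoid_add"
  assumes "\<And>i. odd i \<Longrightarrow> f i = 0"
  shows "(\<Sum>i=1..2*n. f i) = (\<Sum>k=1..n. f (2*k))"
proof (induction n)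
  case (Suc n)
  have "(\<Sum>i=1..2 * Suc n. f i) = (\<Sum>i=1..2*n. f i) + f (Suc (2*n)) + f (2 * Suc n)"
    by (simp add: add.assoc)
  then show ?case
    using Suc assms[of "Suc (2*n)"] by simp
qed simp

lemma sum_reflected_products_partial_fractions:
  fixes c :: "nat \<Rightarrow> real"
  shows "(\<Sum>k=1..n-1. c k * c (n - k) / (real k * real (n - k)))
       = 2 / real n * (\<Sum>k=1..n-1. c k * c (n - k) / real k)"
proof -
  have reflect: "(\<Sum>k=1..n-1. c k * c (n - k) / real (n - k))
      = (\<Sum>k=1..n-1. c k * c (n - k) / real k)"
    by (subst sum.atLeastAtMost_rev) (intro sum.cong refl, auto simp: mult.commute)
  have "(\<Sum>k=1..n-1. c k * c (n - k) / (real k * real (n - k)))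
      = (\<Sum>k=1..n-1. (c k * c (n - k) / real k + c k * c (n - k) / real (n - k)) / real n)"
  proof (intro sum.cong refl)
    fix k
    assume "k \<in> {1..n-1}"
    then have "real k > 0" "real (n - k) > 0" and n_eq: "real n = real k + real (n - k)"
      by auto
    then show "c k * c (n - k) / (real k * real (n - k))
        = (c k * c (n - k) / real k + c k * c (n - k) / real (n - k)) / real n"
      unfolding n_eq by (simp add: field_simps)
  qed
  also have "\<dots> = 2 / real n * (\<Sum>k=1..n-1. c k * c (n - k) / real k)"
    unfolding sum_divide_distrib[symmetric] sum.distrib reflect by simp
  finally show ?thesis .
qed

lemma bernoulli_even_convolution_harm:
  assumes "n \<ge> 2"
  shows "(\<Sum>k=1..n-1. bernoulli (2*k) * bernoulli (2*n - 2*k) / real (2*k))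
       = (\<Sum>k=1..n-1. bernoulli (2*k) * bernoulli (2*n - 2*k) / real (2*k) * real ((2*n) choose (2*k)))
         + bernoulli (2*n) * harm (2*n)"
proof -
  obtain n' where n': "n = Suc n'"
    using assms by (cases n) auto
  have odd_term: "bernoulli i * bernoulli (2*n - i) = 0" if "odd i" for i
  proof (cases "i = 1")
    case True
    then show ?thesis
      using assms by (simp add: bernoulli_odd_eq_0)
  qed (simp add: that bernoulli_odd_eq_0)
  have "(\<Sum>i=1..2*n. bernoulli i * bernoulli (2*n - i) / real i)
      = (\<Sum>k=1..n. bernoulli (2*k) * bernoulli (2*n - 2*k) / real (2*k))"
    by (rule sum_even_indices) (simp add: odd_term)
  also have "\<dots> = (\<Sum>k=1..n-1. bernoulli (2*k) * bernoulli (2*n - 2*k) / real (2*k))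
      + bernoulli (2*n) / real (2*n)"
    using n' by (simp add: bernoulli_0)
  finally have unweighted: "(\<Sum>i=1..2*n. bernoulli i * bernoulli (2*n - i) / real i)
      = (\<Sum>k=1..n-1. bernoulli (2*k) * bernoulli (2*n - 2*k) / real (2*k)) + bernoulli (2*n) / real (2*n)" .
  have "(\<Sum>i=1..2*n. real ((2*n) choose i) * bernoulli i * bernoulli (2*n - i) / real i)
      = (\<Sum>k=1..n. real ((2*n) choose (2*k)) * bernoulli (2*k) * bernoulli (2*n - 2*k) / real (2*k))"
    by (rule sum_even_indices) (simp add: odd_term mult.assoc)
  also have "\<dots> = (\<Sum>k=1..n-1. bernoulli (2*k) * bernoulli (2*n - 2*k) / real (2*k) * real ((2*n) choose (2*k)))
      + bernoulli (2*n) / real (2*n)"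
    using n' by (simp add: bernoulli_0 mult_ac)
  finally have weighted: "(\<Sum>i=1..2*n. real ((2*n) choose i) * bernoulli i * bernoulli (2*n - i) / real i)
      = (\<Sum>k=1..n-1. bernoulli (2*k) * bernoulli (2*n - 2*k) / real (2*k) * real ((2*n) choose (2*k)))
        + bernoulli (2*n) / real (2*n)" .
  have "bernoulli (2*n - 1) = 0"
    using assms by (intro bernoulli_odd_eq_0) auto
  then show ?thesis
    using bernoulli_convolution_harm[of "2*n"] assms unfolding unweighted weighted by simp
qed

theorem theorem2p1:
  fixes n :: nat
  assumes "n \<ge> 2"
  shows "(\<Sum>k=1..n-1. bernoulli (2*k) * bernoulli (2*n-2*k) / (real (2*k) * real (2*n-2*k)))
           = (1 / real n) * (\<Sum>k=1..n-1. bernoulli (2*k) * bernoulli (2*n-2*k) / real (2*k) * real ((2*n) choose (2*k)))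
             + bernoulli (2*n) / real n * harm (2*n)
       \<and> (1 / real n) * (\<Sum>k=1..n-1. bernoulli (2*k) * bernoulli (2*n-2*k) / real (2*k) * real ((2*n) choose (2*k)))
             + bernoulli (2*n) / real n * harm (2*n)
           = (1 / real n) * (\<Sum>k=1..n. bernoulli (2*k) * bernoulli (2*n-2*k) / real (2*k) * real ((2*n) choose (2*k)))
             + bernoulli (2*n) / real n * harm (2*n-1)"
proof -
  define c where "c k = bernoulli (2*k)" for k
  define S where "S = (\<Sum>k=1..n-1. bernoulli (2*k) * bernoulli (2*n-2*k) / real (2*k) * real ((2*n) choose (2*k)))"
  obtain n' where n': "n = Suc n'"
    using assms by (cases n) auto
  have "(\<Sum>k=1..n-1. bernoulli (2*k) * bernoulli (2*n-2*k) / (real (2*k) * real (2*n-2*k)))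
      = (\<Sum>k=1..n-1. c k * c (n - k) / (real k * real (n - k))) / 4"
    unfolding sum_divide_distrib c_def by (intro sum.cong refl) (simp flip: diff_mult_distrib2)
  also have "\<dots> = (\<Sum>k=1..n-1. bernoulli (2*k) * bernoulli (2*n-2*k) / real (2*k)) / real n"
    unfolding sum_reflected_products_partial_fractions
    unfolding sum_distrib_left sum_divide_distrib c_def
    by (intro sum.cong refl) (simp flip: diff_mult_distrib2)
  also have "\<dots> = (1 / real n) * S + bernoulli (2*n) / real n * harm (2*n)"
    unfolding bernoulli_even_convolution_harm[OF assms] S_def by (simp add: add_divide_distrib)
  finally show ?thesis
    using n' by (simp add: S_def bernoulli_0 harm_Suc inverse_eq_divide distrib_left)
qed

end
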